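(* Let $n\ge 1$ and $m\ge 2$ be integers with $m\nmid n$, let $\ell=\lfloor n/m\rfloor$, and let $k\ge 1$. Then the $k$-fold composition $\chi_{n,m}^k$ satisfies $$\chi_{n,m}^k=\sum_{j=0}^{\min\{k,\ell\}}a_j\theta_{m,j},$$ where $a_j\in\mathbb{F}_2$ and $a_j=1$ if and only if $j\preceq k$.
   Context: Indices of coordinates of $x\in\mathbb{F}_2^n$ are taken modulo $n$. $\chi_{n,m}\colon\mathbb{F}_2^n\to\mathbb{F}_2^n$ is given by $\chi_{n,m}(x)=y$ with $y_i=x_i+x_{i+m}(x_{i+m-1}+1)\cdots(x_{i+1}+1)$. For a nonnegative integer $k$, $\theta_{m,k}(x)=y$ with $y_i=x_{i+mk}\prod_{1\le j\le mk-1,\ m\nmid j}(x_{i+j}+1)$; $\theta_{m,0}$ is the identity map. Sums of maps are pointwise sums. For nonnegative integers $j,k$ with binary expansions $j=\sum_i j_i2^i$, $k=\sum_i k_i2^i$ ($j_i,k_i\in\{0,1\}$), $j\preceq k$ means $j_i\le k_i$ for all $i$. *)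

theory Defs
  imports Main "HOL-Library.Z2"
begin

text \<open>Elements of F_2^n are modelled as functions nat => bit (bit = F_2 from HOL-Library.Z2);
  only the coordinates (i mod n) are ever read, so indices are taken modulo n.\<close>

definition chi :: "nat \<Rightarrow> nat \<Rightarrow> (nat \<Rightarrow> bit) \<Rightarrow> (nat \<Rightarrow> bit)" where
  "chi n m x = (\<lambda>i. x (i mod n) + x ((i + m) mod n) * (\<Prod>j\<in>{1..m-1}. x ((i + j) mod n) + 1))"

definition theta :: "nat \<Rightarrow> nat \<Rightarrow> nat \<Rightarrow> (nat \<Rightarrow> bit) \<Rightarrow> (nat \<Rightarrow> bit)" where
  "theta n m k x = (if k = 0 then x else
     (\<lambda>i. x ((i + m * k) mod n) *
          (\<Prod>j\<in>{j. 1 \<le> j \<and> j \<le> m * k - 1 \<and> \<not> m dvd j}. x ((i + j) mod n) + 1)))"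

definition bin_le :: "nat \<Rightarrow> nat \<Rightarrow> bool" where
  "bin_le j k = (\<forall>i. (j div 2 ^ i) mod 2 \<le> (k div 2 ^ i) mod 2)"

end

theory Submission
  imports Defs
begin

(* chi acts on the maps theta_j like "1 + shift": theta_j o chi = theta_j + theta_(j+1).
   Indeed theta_(j+1)(x)_i is the indicator that x_(i+1), ..., x_(i+m-1) all vanish times
   theta_j(x)_(i+m), and chi leaves this window of coordinates unchanged whenever
   theta_j(x)_(i+m) or theta_(j+1)(x)_(i+m) is nonzero. Iterating, chi^k is the sum of the
   theta_j weighted by binomial(k, j), which by Lucas' theorem is odd iff j is dominated by k
   digitwise. Finally theta_j = 0 for j > l: the offsets of theta_(l+1) wrap around the
   cycle, and r = m (l + 1) - n is not a multiple of m, so its product contains the factor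
   x_(i+r) (x_(i+r) + 1) = 0. *)

(* keep F_2 arithmetic as ring arithmetic instead of rewriting it to XOR/AND *)
declare add_bit_eq_xor [simp del] mult_bit_eq_and [simp del]

lemma bit_mult_self_add_one: "b * (b + 1) = (0 :: bit)"
  by (cases b) simp_all

lemma of_nat_bit_eq_of_bool_odd: "(of_nat n :: bit) = of_bool (odd n)"
  by (induction n) auto

lemma bin_le_iff_bit: "bin_le j k \<longleftrightarrow> (\<forall>i. bit j i \<longrightarrow> bit k i)"
proof -
  have "a mod 2 \<le> b mod 2 \<longleftrightarrow> (odd a \<longrightarrow> odd b)" for a b :: nat
    by presburger
  then show ?thesis
    unfolding bin_le_def bit_iff_odd by simp
qed

lemma bin_le_rec: "bin_le j k \<longleftrightarrow> (odd j \<longrightarrow> odd k) \<and> bin_le (j div 2) (k div 2)"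
  unfolding bin_le_iff_bit by (metis bit_0 bit_Suc not0_implies_Suc)

lemma bin_le_0_right [simp]: "bin_le j 0 \<longleftrightarrow> j = 0"
  by (auto simp: bin_le_iff_bit bit_eq_iff)

lemma bin_le_0_left [simp]: "bin_le 0 k"
  by (simp add: bin_le_iff_bit)

lemma bin_le_Suc_Suc: "bin_le (Suc j) (Suc k) \<longleftrightarrow> bin_le (Suc j) k \<noteq> bin_le j k"
proof (induction k arbitrary: j rule: less_induct)
  case (less k)
  consider "even k" | "odd k" "even j" | "odd k" "odd j"
    by blast
  then show ?case
  proof cases
    case 1
    then show ?thesis
      by (cases "even j"; subst (1 2 3) bin_le_rec; simp)
  next
    case 2
    then show ?thesis
      by (subst (1 2 3) bin_le_rec) simp
  next
    case 3
    then have "k div 2 < k"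
      by (simp add: odd_pos)
    then have "bin_le (Suc (j div 2)) (Suc (k div 2)) \<longleftrightarrow>
        bin_le (Suc (j div 2)) (k div 2) \<noteq> bin_le (j div 2) (k div 2)"
      by (rule less.IH)
    with 3 show ?thesis
      by (subst (1 2 3) bin_le_rec) simp
  qed
qed

lemma odd_choose_iff_bin_le: "odd (k choose j) \<longleftrightarrow> bin_le j k"
proof (induction k arbitrary: j)
  case 0
  then show ?case by (cases j) simp_all
next
  case (Suc k)
  then show ?case by (cases j) (auto simp: bin_le_Suc_Suc simp flip: Suc.IH)
qed

lemma funpow_binomial_expansion:
  fixes f :: "'a \<Rightarrow> 'a" and T :: "nat \<Rightarrow> 'a \<Rightarrow> 'b::comm_semiring_1"
  assumes T_f: "\<And>j x. T j (f x) = T j x + T (Suc j) x"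
  shows "T 0 ((f ^^ k) x) = (\<Sum>j\<le>k. of_nat (k choose j) * T j x)"
proof (induction k arbitrary: x)
  case 0
  then show ?case by simp
next
  case (Suc k)
  have "(\<Sum>j\<le>k. of_nat (k choose j) * T j x) = (\<Sum>j\<le>Suc k. of_nat (k choose j) * T j x)"
    by (simp add: binomial_eq_0)
  also have "\<dots> = T 0 x + (\<Sum>j\<le>k. of_nat (k choose Suc j) * T (Suc j) x)"
    by (subst sum.atMost_Suc_shift) simp
  finally have low: "(\<Sum>j\<le>k. of_nat (k choose j) * T j x) = \<dots>" .
  have "T 0 ((f ^^ Suc k) x) = T 0 ((f ^^ k) (f x))"
    by (simp only: funpow_Suc_right comp_apply)
  also have "\<dots> = (\<Sum>j\<le>k. of_nat (k choose j) * T j x) + (\<Sum>j\<le>k. of_nat (k choose j) * T (Suc j) x)"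
    by (simp add: Suc.IH T_f distrib_left sum.distrib)
  also have "\<dots> = T 0 x + (\<Sum>j\<le>k. of_nat (Suc k choose Suc j) * T (Suc j) x)"
    by (simp add: low distrib_right sum.distrib add_ac)
  also have "\<dots> = (\<Sum>j\<le>Suc k. of_nat (Suc k choose j) * T j x)"
    by (subst sum.atMost_Suc_shift) simp
  finally show ?case .
qed

definition zero_window :: "nat \<Rightarrow> nat \<Rightarrow> (nat \<Rightarrow> bit) \<Rightarrow> nat \<Rightarrow> bit" where
  "zero_window n m x i = (\<Prod>t\<in>{1..m-1}. x ((i + t) mod n) + 1)"

definition theta_offsets :: "nat \<Rightarrow> nat \<Rightarrow> nat set" where
  "theta_offsets m j = {t. 1 \<le> t \<and> t \<le> m * j - 1 \<and> \<not> m dvd t}"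

lemma chi_eq_zero_window: "chi n m x i = x (i mod n) + x ((i + m) mod n) * zero_window n m x i"
  by (simp add: chi_def zero_window_def)

lemma zero_window_mod [simp]: "zero_window n m x (i mod n) = zero_window n m x i"
  by (simp add: zero_window_def mod_add_left_eq)

lemma zero_window_eq_0_iff: "zero_window n m x i = 0 \<longleftrightarrow> (\<exists>t\<in>{1..m-1}. x ((i + t) mod n) = 1)"
proof -
  have "b + 1 = 0 \<longleftrightarrow> b = 1" for b :: bit
    by (cases b) simp_all
  then show ?thesis
    by (simp add: zero_window_def prod_zero_iff)
qed

lemma finite_theta_offsets: "finite (theta_offsets m j)"
  unfolding theta_offsets_def by (rule finite_subset[of _ "{..m * j}"]) auto

lemma theta_offsets_Suc:
  assumes "0 < m"
  shows "theta_offsets m (Suc j) = {1..m-1} \<union> (\<lambda>t. t + m) ` theta_offsets m j"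
proof (intro set_eqI iffI)
  fix t assume t: "t \<in> theta_offsets m (Suc j)"
  show "t \<in> {1..m-1} \<union> (\<lambda>t. t + m) ` theta_offsets m j"
  proof (cases "t < m")
    case True
    with t show ?thesis by (auto simp: theta_offsets_def)
  next
    case False
    moreover have "t \<noteq> m"
      using t by (auto simp: theta_offsets_def)
    ultimately have "t - m \<in> theta_offsets m j"
      using t by (auto simp: theta_offsets_def dvd_minus_self)
    moreover have "t = t - m + m"
      using False by simp
    ultimately show ?thesis by blast
  qed
next
  fix t assume "t \<in> {1..m-1} \<union> (\<lambda>t. t + m) ` theta_offsets m j"
  with assms show "t \<in> theta_offsets m (Suc j)"
    by (auto simp: theta_offsets_def dest: dvd_imp_le)
qed

lemma theta_0 [simp]: "theta n m 0 x = x"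
  by (simp add: theta_def)

lemma theta_Suc_eq_prod:
  "theta n m (Suc j) x i = x ((i + m * Suc j) mod n) * (\<Prod>t\<in>theta_offsets m (Suc j). x ((i + t) mod n) + 1)"
  by (simp add: theta_def theta_offsets_def)

lemma theta_mod_eq:
  "theta n m j x (i mod n) = x ((i + m * j) mod n) * (\<Prod>t\<in>theta_offsets m j. x ((i + t) mod n) + 1)"
  by (simp add: theta_def theta_offsets_def mod_add_left_eq)

lemma theta_Suc:
  assumes "0 < m"
  shows "theta n m (Suc j) x i = zero_window n m x i * theta n m j x ((i + m) mod n)"
proof -
  have "{1..m-1} \<inter> (\<lambda>t. t + m) ` theta_offsets m j = {}"
    by auto
  then have "(\<Prod>t\<in>theta_offsets m (Suc j). x ((i + t) mod n) + 1)
      = zero_window n m x i * (\<Prod>t\<in>theta_offsets m j. x ((i + m + t) mod n) + 1)"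
    unfolding theta_offsets_Suc[OF assms]
    by (simp add: prod.union_disjoint finite_theta_offsets prod.reindex zero_window_def add_ac)
  then show ?thesis
    using theta_mod_eq[of n m j x "i + m"] by (simp add: theta_Suc_eq_prod ac_simps)
qed

lemma theta_Suc_div_eq_0:
  assumes "0 < m" and "\<not> m dvd n"
  shows "theta n m (Suc (n div m)) x i = 0"
proof -
  define r where "r = m - n mod m"
  have "0 < n mod m" "n mod m < m"
    using assms by (simp_all add: mod_greater_zero_iff_not_dvd)
  have wrap: "m * Suc (n div m) = n + r"
    unfolding r_def mult_Suc_right using mult_div_mod_eq[of m n] \<open>n mod m < m\<close> by linarith
  have r: "0 < r" "r < m"
    unfolding r_def using \<open>0 < n mod m\<close> \<open>n mod m < m\<close> by simp_all
  from r wrap have "r \<in> theta_offsets m (Suc (n div m))"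
    by (auto simp: theta_offsets_def dest: dvd_imp_le)
  then have "theta n m (Suc (n div m)) x i = x ((i + m * Suc (n div m)) mod n)
      * ((x ((i + r) mod n) + 1) * (\<Prod>t\<in>theta_offsets m (Suc (n div m)) - {r}. x ((i + t) mod n) + 1))"
    by (simp add: theta_Suc_eq_prod prod.remove finite_theta_offsets)
  also have "x ((i + m * Suc (n div m)) mod n) = x ((i + r) mod n)"
    unfolding wrap by (metis add.left_commute mod_add_self1)
  finally show ?thesis
    by (simp add: mult.assoc[symmetric] bit_mult_self_add_one)
qed

lemma theta_eq_0:
  assumes "0 < m" and "\<not> m dvd n" and "n div m < j"
  shows "theta n m j x i = 0"
  using assms(3)
proof (induction j arbitrary: i)
  case 0
  then show ?case by simp
next
  case (Suc j)
  then show ?case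
    using theta_Suc_div_eq_0[OF assms(1,2)] theta_Suc[OF assms(1)] by (cases "j = n div m") auto
qed

lemma theta_eq_1_imp_disj:
  assumes "0 < m" and "theta n m j x i = 1"
  shows "x i = 1 \<or> zero_window n m x i = 1"
  using assms by (cases j) (auto simp: theta_Suc)

lemma zero_window_chi:
  assumes "x ((i + m) mod n) = 1 \<or> zero_window n m x ((i + m) mod n) = 1"
  shows "zero_window n m (chi n m x) i = zero_window n m x i"
  unfolding zero_window_def
proof (rule prod.cong[OF refl])
  fix t assume t: "t \<in> {1..m-1}"
  from assms have "x ((i + t + m) mod n) * zero_window n m x (i + t) = 0"
  proof
    assume "x ((i + m) mod n) = 1"
    moreover have "m - t \<in> {1..m-1}" and "i + t + (m - t) = i + m"
      using t by auto
    ultimately have "zero_window n m x (i + t) = 0"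
      unfolding zero_window_eq_0_iff by metis
    then show ?thesis by simp
  next
    assume "zero_window n m x ((i + m) mod n) = 1"
    then have "x ((i + m + t) mod n) = 0"
      using t zero_window_eq_0_iff[of n m x "i + m"] by auto
    then show ?thesis by (simp add: add_ac)
  qed
  then show "chi n m x ((i + t) mod n) + 1 = x ((i + t) mod n) + 1"
    by (simp add: chi_eq_zero_window mod_add_left_eq)
qed

(* Stated at i mod n because theta n m 0 x = x reads its argument without reducing i. *)
lemma theta_chi:
  assumes "0 < m"
  shows "theta n m j (chi n m x) (i mod n) = theta n m j x (i mod n) + theta n m (Suc j) x (i mod n)"
proof (induction j arbitrary: i)
  case 0
  then show ?case by (simp add: chi_eq_zero_window theta_Suc[OF assms] mult.commute mod_add_left_eq)
next
  case (Suc j)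
  let ?i' = "(i + m) mod n"
  let ?W = "theta n m j x ?i' + theta n m (Suc j) x ?i'"
  have "zero_window n m (chi n m x) i * ?W = zero_window n m x i * ?W"
  proof (cases "?W = 0")
    case False
    then have "theta n m j x ?i' = 1 \<or> theta n m (Suc j) x ?i' = 1"
      by auto
    then have "x ?i' = 1 \<or> zero_window n m x ?i' = 1"
      using theta_eq_1_imp_disj[OF assms] theta_Suc[OF assms] by fastforce
    then show ?thesis
      by (simp add: zero_window_chi)
  qed simp
  then show ?case
    using Suc.IH[of "i + m"] by (simp add: theta_Suc[OF assms] distrib_left mod_add_left_eq)
qed

theorem theorem4:
  fixes n m k :: nat and a :: "nat \<Rightarrow> bit"
  assumes "n \<ge> 1" and "m \<ge> 2" and "\<not> m dvd n" and "k \<ge> 1"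
    and "\<And>j. a j = 1 \<longleftrightarrow> bin_le j k"
  shows "\<forall>x :: nat \<Rightarrow> bit. \<forall>i<n.
           (chi n m ^^ k) x i = (\<Sum>j\<in>{0..min k (n div m)}. a j * theta n m j x i)"
proof (intro allI impI)
  fix x :: "nat \<Rightarrow> bit" and i
  assume "i < n"
  have "0 < m"
    using assms(2) by simp
  have coeff: "of_nat (k choose j) = a j" for j
    using assms(5)[of j] by (cases "a j") (simp_all add: of_nat_bit_eq_of_bool_odd odd_choose_iff_bin_le)
  have "(chi n m ^^ k) x i = (\<Sum>j\<le>k. a j * theta n m j x i)"
    using funpow_binomial_expansion[where T = "\<lambda>j x. theta n m j x (i mod n)", OF theta_chi[OF \<open>0 < m\<close>]]
      \<open>i < n\<close> by (simp add: coeff)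
  also have "\<dots> = (\<Sum>j\<in>{0..min k (n div m)}. a j * theta n m j x i)"
    by (rule sum.mono_neutral_right) (auto simp: theta_eq_0[OF \<open>0 < m\<close> assms(3)])
  finally show "(chi n m ^^ k) x i = (\<Sum>j\<in>{0..min k (n div m)}. a j * theta n m j x i)" .
qed

end
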